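(* Let $G$ be a regular graph whose line graph $L(G)$ has at least $3$ vertices. Then $\lambda_3(L(G)) < \frac{|V(L(G))|}{3}$.
   Context: The line graph $L(G)$ has the edges of $G$ as vertices, two being adjacent when they share an endpoint. $\lambda_3$ denotes the third largest eigenvalue (with multiplicity) of the adjacency matrix. *)

theory Defs
  imports "Jordan_Normal_Form.Char_Poly"
begin

definition simple_graph :: "'a set \<Rightarrow> 'a set set \<Rightarrow> bool" where
  "simple_graph V E \<longleftrightarrow> finite V \<and> (\<forall>e\<in>E. e \<subseteq> V \<and> card e = 2)"

definition degree :: "'a set set \<Rightarrow> 'a \<Rightarrow> nat" where
  "degree E v = card {e\<in>E. v \<in> e}"

definition regular_graph :: "'a set \<Rightarrow> 'a set set \<Rightarrow> bool" where
  "regular_graph V E \<longleftrightarrow> simple_graph V E \<and> (\<exists>k. \<forall>v\<in>V. degree E v = k)"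

definition line_adj :: "'a set \<Rightarrow> 'a set \<Rightarrow> bool" where
  "line_adj e f \<longleftrightarrow> e \<noteq> f \<and> e \<inter> f \<noteq> {}"

text \<open>Adjacency matrix of a graph (vertex set W, adjacency relation R), with respect to
some enumeration of W (the spectrum does not depend on the choice).\<close>
definition vertex_list :: "'b set \<Rightarrow> 'b list" where
  "vertex_list W = (SOME vs. distinct vs \<and> set vs = W)"

definition adj_matrix :: "'b set \<Rightarrow> ('b \<Rightarrow> 'b \<Rightarrow> bool) \<Rightarrow> real mat" where
  "adj_matrix W R = (let vs = vertex_list W in
     mat (length vs) (length vs) (\<lambda>(i,j). if R (vs ! i) (vs ! j) then 1 else 0))"

text \<open>Eigenvalues with multiplicity (roots of the characteristic polynomial),
listed in non-increasing order; lambda_k is the k-th entry (1-based).\<close>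
definition eigenvalues_desc :: "real mat \<Rightarrow> real list" where
  "eigenvalues_desc A = rev (sorted_list_of_multiset (proots (char_poly A)))"

definition graph_lambda :: "nat \<Rightarrow> 'b set \<Rightarrow> ('b \<Rightarrow> 'b \<Rightarrow> bool) \<Rightarrow> real" where
  "graph_lambda k W R = eigenvalues_desc (adj_matrix W R) ! (k - 1)"

end

theory Submission
  imports Defs "Jordan_Normal_Form.Schur_Decomposition"
begin

text \<open>The line graph of a \<open>k\<close>-regular graph on \<open>n\<close> vertices is \<open>(2k - 2)\<close>-regular on
  \<open>m = nk/2\<close> vertices, so its adjacency matrix \<open>A\<close> has \<open>tr A = 0\<close> and
  \<open>tr A\<^sup>2 = m(2k - 2)\<close>. Hence the eigenvalues satisfy \<open>\<Sum>(\<lambda> + 1)\<^sup>2 = m(2k - 1)\<close>, all terms being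
  nonnegative. If \<open>\<lambda>\<^sub>3 \<ge> m/3\<close>, the eigenvalue \<open>2k - 2\<close> (of the all-ones vector) and two
  further eigenvalues among \<open>\<lambda>\<^sub>1, \<lambda>\<^sub>2, \<lambda>\<^sub>3\<close> give
  \<open>(2k - 1)\<^sup>2 + 2(m/3 + 1)\<^sup>2 \<le> m(2k - 1)\<close>, which fails for every \<open>1 \<le> k < n\<close>.\<close>

definition mat_trace :: "'a::comm_ring_1 mat \<Rightarrow> 'a" where
  "mat_trace A = (\<Sum>i<dim_row A. A $$ (i, i))"

lemma mat_trace_mult_comm:
  assumes A: "A \<in> carrier_mat n m" and B: "B \<in> carrier_mat m n"
  shows "mat_trace (A * B) = mat_trace (B * A)"
proof -
  have "mat_trace (A * B) = (\<Sum>i<n. \<Sum>j<m. A $$ (i, j) * B $$ (j, i))"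
    unfolding mat_trace_def using A B
    by (auto simp: scalar_prod_def atLeast0LessThan intro!: sum.cong)
  also have "\<dots> = (\<Sum>j<m. \<Sum>i<n. B $$ (j, i) * A $$ (i, j))"
    by (subst sum.swap) (simp add: mult.commute)
  also have "\<dots> = mat_trace (B * A)"
    unfolding mat_trace_def using A B
    by (auto simp: scalar_prod_def atLeast0LessThan intro!: sum.cong)
  finally show ?thesis .
qed

lemma mat_trace_similar_mat_wit:
  assumes A: "A \<in> carrier_mat n n" and sim: "similar_mat_wit A B P Q"
  shows "mat_trace A = mat_trace B"
proof -
  from similar_mat_witD2[OF A sim] have QP: "Q * P = 1\<^sub>m n" and A_eq: "A = P * B * Q"
    and B: "B \<in> carrier_mat n n" and P: "P \<in> carrier_mat n n" and Q: "Q \<in> carrier_mat n n"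
    by auto
  have "mat_trace A = mat_trace (Q * (P * B))"
    unfolding A_eq using B P Q by (intro mat_trace_mult_comm[of _ n n]) auto
  also have "Q * (P * B) = (Q * P) * B" using B P Q by (simp add: assoc_mult_mat)
  finally show ?thesis using QP B by simp
qed

lemma similar_mat_wit_square:
  assumes sim: "similar_mat_wit A B P Q"
  shows "similar_mat_wit (A * A) (B * B) P Q"
proof -
  define n where "n = dim_row A"
  note wit = similar_mat_witD[OF n_def sim]
  have "A * A = P * B * (Q * P) * B * Q"
    using wit(3-7) by (simp add: assoc_mult_mat[of _ n n _ n _ n])
  also have "\<dots> = P * B * B * Q"
    using wit(2,5-7) by simp
  also have "\<dots> = P * (B * B) * Q"
    using wit(5-7) by (simp add: assoc_mult_mat[of _ n n _ n _ n])
  finally show ?thesis using wit by (intro similar_mat_witI) auto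
qed

lemma upper_triangular_square_diag:
  fixes B :: "'a::comm_ring_1 mat"
  assumes B: "B \<in> carrier_mat n n" and ut: "upper_triangular B" and i: "i < n"
  shows "(B * B) $$ (i, i) = (B $$ (i, i))\<^sup>2"
proof -
  have "B $$ (i, j) * B $$ (j, i) = (if j = i then (B $$ (i, i))\<^sup>2 else 0)" if "j < n" for j
    using upper_triangularD[OF ut, of j i] upper_triangularD[OF ut, of i j] B i that
    by (cases j i rule: linorder_cases) (auto simp: power2_eq_square)
  then have "(B * B) $$ (i, i) = (\<Sum>j<n. if j = i then (B $$ (i, i))\<^sup>2 else 0)"
    using B i by (auto simp: scalar_prod_def atLeast0LessThan intro!: sum.cong)
  then show ?thesis using i by simp
qed

text \<open>Both traces are read off a Schur decomposition, whose triangular factor carries the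
  roots on its diagonal.\<close>
lemma mat_trace_char_poly_split:
  fixes A :: "'a::conjugatable_ordered_field mat"
  assumes A: "A \<in> carrier_mat n n" and cp: "char_poly A = (\<Prod>r\<leftarrow>rs. [:-r, 1:])"
  shows "mat_trace A = sum_list rs"
    and "mat_trace (A * A) = sum_list (map (\<lambda>r. r\<^sup>2) rs)"
proof -
  obtain B P Q where "schur_decomposition A rs = (B, P, Q)"
    by (cases "schur_decomposition A rs") auto
  from schur_decomposition[OF A cp this] have sim: "similar_mat_wit A B P Q"
    and ut: "upper_triangular B" and diag: "diag_mat B = rs" by auto
  have B: "B \<in> carrier_mat n n" using similar_mat_witD2[OF A sim] by auto
  have rs: "rs = map (\<lambda>i. B $$ (i, i)) [0..<n]" using diag B unfolding diag_mat_def by auto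
  have "mat_trace A = mat_trace B" using mat_trace_similar_mat_wit[OF A sim] .
  also have "\<dots> = sum_list rs" unfolding rs mat_trace_def using B
    by (simp add: sum_list_distinct_conv_sum_set atLeast0LessThan)
  finally show "mat_trace A = sum_list rs" .
  have "mat_trace (A * A) = mat_trace (B * B)"
    using mat_trace_similar_mat_wit[OF mult_carrier_mat[OF A A] similar_mat_wit_square[OF sim]] .
  also have "\<dots> = (\<Sum>i<n. (B $$ (i, i))\<^sup>2)"
    unfolding mat_trace_def using B upper_triangular_square_diag[OF B ut] by simp
  also have "\<dots> = sum_list (map (\<lambda>r. r\<^sup>2) rs)" unfolding rs
    by (simp add: sum_list_distinct_conv_sum_set atLeast0LessThan o_def)
  finally show "mat_trace (A * A) = sum_list (map (\<lambda>r. r\<^sup>2) rs)" .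
qed

text \<open>The Rayleigh quotient \<open>v\<^sup>* A v / v\<^sup>* v\<close> of a Hermitian matrix is real.\<close>
lemma hermitian_eigenvalue_real:
  fixes A :: "complex mat"
  assumes A: "A \<in> carrier_mat n n"
    and herm: "\<And>i j. i < n \<Longrightarrow> j < n \<Longrightarrow> A $$ (i, j) = cnj (A $$ (j, i))"
    and ev: "eigenvalue A a"
  shows "a \<in> \<real>"
proof -
  from ev obtain v where v: "v \<in> carrier_vec n" "v \<noteq> 0\<^sub>v n" "A *\<^sub>v v = a \<cdot>\<^sub>v v"
    unfolding eigenvalue_def eigenvector_def using A by auto
  define x where "x = (\<Sum>i<n. cnj (v $ i) * (A *\<^sub>v v) $ i)"
  define s where "s = (\<Sum>i<n. cnj (v $ i) * v $ i)"
  have x_eq: "x = a * s" unfolding x_def s_def using v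
    by (auto simp: sum_distrib_left intro!: sum.cong)
  have "(A *\<^sub>v v) $ i = (\<Sum>j<n. A $$ (i, j) * v $ j)" if "i < n" for i
    using that A v(1) by (auto simp: scalar_prod_def atLeast0LessThan)
  then have x_double: "x = (\<Sum>i<n. \<Sum>j<n. A $$ (i, j) * cnj (v $ i) * v $ j)"
    unfolding x_def by (auto simp: sum_distrib_left mult.assoc intro!: sum.cong)
  have "cnj x = (\<Sum>i<n. \<Sum>j<n. cnj (A $$ (i, j)) * v $ i * cnj (v $ j))"
    unfolding x_double by (simp add: mult.commute mult.left_commute)
  also have "\<dots> = (\<Sum>i<n. \<Sum>j<n. A $$ (j, i) * v $ i * cnj (v $ j))"
    by (intro sum.cong refl, subst herm) auto
  also have "\<dots> = x"
    unfolding x_double by (subst sum.swap) (simp add: mult.commute mult.left_commute)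
  finally have x_real: "cnj x = x" .
  define r where "r = (\<Sum>i<n. (cmod (v $ i))\<^sup>2)"
  have s_eq: "s = of_real r"
    unfolding s_def r_def of_real_sum
    by (intro sum.cong refl) (subst complex_norm_square, simp add: mult.commute)
  obtain i where i: "i < n" "v $ i \<noteq> 0" using v
    by (metis carrier_vecD eq_vecI index_zero_vec)
  have "r > 0"
    unfolding r_def using i by (intro sum_pos2[of "{..<n}" i]) auto
  then have "s \<noteq> 0" and "cnj s = s" unfolding s_eq by simp_all
  with x_real x_eq have "cnj a = a" by simp
  then show ?thesis by (simp add: Reals_cnj_iff)
qed

lemma real_symmetric_char_poly_split:
  fixes A :: "real mat"
  assumes A: "A \<in> carrier_mat n n"
    and sym: "\<And>i j. i < n \<Longrightarrow> j < n \<Longrightarrow> A $$ (i, j) = A $$ (j, i)"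
  obtains rs where "length rs = n" and "char_poly A = (\<Prod>r\<leftarrow>rs. [:-r, 1:])"
proof -
  interpret of_real_poly: map_poly_inj_comm_ring_hom "of_real :: real \<Rightarrow> complex" ..
  define Ac where "Ac = map_mat (of_real :: real \<Rightarrow> complex) A"
  have Ac: "Ac \<in> carrier_mat n n" using A unfolding Ac_def by auto
  have herm: "Ac $$ (i, j) = cnj (Ac $$ (j, i))" if "i < n" "j < n" for i j
    using that A sym unfolding Ac_def by auto
  from char_poly_factorized[OF Ac] obtain as
    where as: "char_poly Ac = (\<Prod>a\<leftarrow>as. [:-a, 1:])" "length as = n" by auto
  have real: "of_real (Re a) = a" if "a \<in> set as" for a
  proof -
    have "eigenvalue Ac a"
      unfolding eigenvalue_root_char_poly[OF Ac] as(1) using that by (rule linear_poly_root)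
    then have "a \<in> \<real>" using hermitian_eigenvalue_real[OF Ac herm] by blast
    then show ?thesis by (simp add: Reals_cnj_iff complex_eq_iff)
  qed
  have "map_poly of_real (char_poly A) = char_poly Ac"
    unfolding Ac_def by (rule of_real_hom.char_poly_hom[OF A, symmetric])
  also have "\<dots> = (\<Prod>r\<leftarrow>map Re as. map_poly of_real [:-r, 1:])"
    unfolding as(1) using real by (auto simp: o_def intro!: arg_cong[where f = prod_list])
  also have "\<dots> = map_poly of_real (\<Prod>r\<leftarrow>map Re as. [:-r, 1:])"
    by (simp add: of_real_poly.hom_prod_list o_def)
  finally have "char_poly A = (\<Prod>r\<leftarrow>map Re as. [:-r, 1:])" by simp
  with as(2) show ?thesis by (intro that[of "map Re as"]) auto
qed

lemma proots_prod_linear: "proots (\<Prod>r\<leftarrow>rs. [:-r, 1:]) = mset (rs :: real list)"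
proof (induction rs)
  case (Cons a rs)
  have "(\<Prod>r\<leftarrow>rs. [:-r, 1:]) \<noteq> (0 :: real poly)" by (auto simp: prod_list_zero_iff)
  then have "proots (\<Prod>r\<leftarrow>a # rs. [:-r, 1:]) = proots [:-a, 1:] + proots (\<Prod>r\<leftarrow>rs. [:-r, 1:])"
    by (simp only: list.map prod_list.Cons, intro proots_mult) auto
  also have "proots [:-a, 1:] = {#a#}" using proots_linear_factor[of "-a"] by simp
  finally show ?case using Cons by simp
qed simp

lemma sorted_eigenvalues_desc: "sorted_wrt (\<ge>) (eigenvalues_desc A)"
  by (simp add: eigenvalues_desc_def sorted_wrt_rev)

lemma eigenvalue_in_eigenvalues_desc:
  assumes A: "A \<in> carrier_mat n n" and ev: "eigenvalue A a"
  shows "a \<in> set (eigenvalues_desc A)"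
proof -
  have "char_poly A \<noteq> 0" using degree_monic_char_poly[OF A] by auto
  moreover have "poly (char_poly A) a = 0" using ev eigenvalue_root_char_poly[OF A] by simp
  ultimately show ?thesis by (simp add: eigenvalues_desc_def set_count_proots)
qed

lemma real_symmetric_eigenvalues_desc:
  fixes A :: "real mat"
  assumes A: "A \<in> carrier_mat n n"
    and sym: "\<And>i j. i < n \<Longrightarrow> j < n \<Longrightarrow> A $$ (i, j) = A $$ (j, i)"
  shows "length (eigenvalues_desc A) = n"
    and "sum_list (eigenvalues_desc A) = mat_trace A"
    and "sum_list (map (\<lambda>r. r\<^sup>2) (eigenvalues_desc A)) = mat_trace (A * A)"
proof -
  obtain rs where len: "length rs = n" and cp: "char_poly A = (\<Prod>r\<leftarrow>rs. [:-r, 1:])"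
    using real_symmetric_char_poly_split[OF A sym] .
  have ev: "mset (eigenvalues_desc A) = mset rs"
    unfolding eigenvalues_desc_def cp proots_prod_linear by simp
  show "length (eigenvalues_desc A) = n" using mset_eq_length[OF ev] len by simp
  show "sum_list (eigenvalues_desc A) = mat_trace A"
    unfolding mat_trace_char_poly_split(1)[OF A cp] by (metis ev sum_mset_sum_list)
  show "sum_list (map (\<lambda>r. r\<^sup>2) (eigenvalues_desc A)) = mat_trace (A * A)"
    unfolding mat_trace_char_poly_split(2)[OF A cp] by (metis ev mset_map sum_mset_sum_list)
qed

lemma sum_list_ge_member_and_two_leading:
  fixes xs :: "'a::linorder list" and f :: "'a \<Rightarrow> real"
  assumes sorted: "sorted_wrt (\<ge>) xs" and len: "length xs \<ge> 3"
    and a: "a \<in> set xs" and t: "t \<le> xs ! 2"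
    and f_nonneg: "\<And>x. 0 \<le> f x" and f_mono: "\<And>x. t \<le> x \<Longrightarrow> f t \<le> f x"
  shows "f a + 2 * f t \<le> sum_list (map f xs)"
proof -
  obtain x0 x1 x2 rest where xs: "xs = x0 # x1 # x2 # rest"
    using len by (auto simp: numeral_3_eq_3 Suc_le_length_iff)
  have "t \<le> x2" "x2 \<le> x1" "x1 \<le> x0" using sorted t unfolding xs by auto
  then have lead: "f t \<le> f x0" "f t \<le> f x1" "f t \<le> f x2" using f_mono by auto
  have rest: "0 \<le> sum_list (map f rest)" by (intro sum_list_nonneg) (auto simp: f_nonneg)
  have "f a \<le> sum_list (map f rest)" if "a \<in> set rest"
    using that f_nonneg by (intro member_le_sum_list) auto
  with a lead rest f_nonneg[of t] show ?thesis unfolding xs by auto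
qed

lemma simple_graph_finite_edges:
  assumes "simple_graph V E"
  shows "finite E"
proof -
  have "E \<subseteq> Pow V" and "finite V" using assms unfolding simple_graph_def by auto
  then show ?thesis by (meson finite_Pow_iff finite_subset)
qed

lemma sum_degree_eq_twice_card_edges:
  assumes sg: "simple_graph V E"
  shows "(\<Sum>v\<in>V. degree E v) = 2 * card E"
proof -
  have finV: "finite V" using sg unfolding simple_graph_def by auto
  have finE: "finite E" using sg by (rule simple_graph_finite_edges)
  have "(\<Sum>v\<in>V. degree E v) = (\<Sum>v\<in>V. \<Sum>e\<in>E. of_bool (v \<in> e))"
    unfolding degree_def using finE by (simp add: sum_of_bool_eq Int_def conj_commute)
  also have "\<dots> = (\<Sum>e\<in>E. \<Sum>v\<in>V. of_bool (v \<in> e))" by (rule sum.swap)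
  also have "\<dots> = (\<Sum>e\<in>E. card e)"
    using sg finV unfolding simple_graph_def
    by (intro sum.cong refl) (auto simp: sum_of_bool_eq Int_absorb1)
  also have "\<dots> = 2 * card E" using sg unfolding simple_graph_def by simp
  finally show ?thesis .
qed

lemma degree_less_card:
  assumes sg: "simple_graph V E" and v: "v \<in> V"
  shows "degree E v < card V"
proof -
  have finV: "finite V" using sg unfolding simple_graph_def by auto
  have "{e\<in>E. v \<in> e} \<subseteq> (\<lambda>w. {v, w}) ` (V - {v})"
  proof
    fix e assume e: "e \<in> {e\<in>E. v \<in> e}"
    then have "e \<subseteq> V" "card e = 2" using sg unfolding simple_graph_def by auto
    with e show "e \<in> (\<lambda>w. {v, w}) ` (V - {v})" by (auto simp: card_2_iff)
  qed
  then have "degree E v \<le> card ((\<lambda>w. {v, w}) ` (V - {v}))"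
    unfolding degree_def using finV by (intro card_mono) auto
  also have "\<dots> \<le> card (V - {v})" using finV by (intro card_image_le) auto
  also have "\<dots> < card V" using finV v by (rule card_Diff1_less)
  finally show ?thesis .
qed

text \<open>The edges meeting \<open>{u, v}\<close> are those at \<open>u\<close> and those at \<open>v\<close>, which overlap only
  in \<open>{u, v}\<close> itself.\<close>
lemma card_line_adj:
  assumes sg: "simple_graph V E" and uv: "{u, v} \<in> E"
  shows "card {f\<in>E. line_adj {u, v} f} + 2 = degree E u + degree E v"
proof -
  define X where "X = {f\<in>E. u \<in> f}"
  define Y where "Y = {f\<in>E. v \<in> f}"
  have fin: "finite X" "finite Y"
    using simple_graph_finite_edges[OF sg] unfolding X_def Y_def by auto
  have "X \<inter> Y \<subseteq> {{u, v}}"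
  proof
    fix f assume f: "f \<in> X \<inter> Y"
    then have "card f = 2" and "{u, v} \<subseteq> f" using sg unfolding X_def Y_def simple_graph_def by auto
    moreover have "card {u, v} = 2" using sg uv unfolding simple_graph_def by auto
    ultimately have "{u, v} = f" by (intro card_subset_eq) (auto intro: card_ge_0_finite)
    then show "f \<in> {{u, v}}" by simp
  qed
  then have XY: "X \<inter> Y = {{u, v}}" using uv unfolding X_def Y_def by auto
  have "card (X \<union> Y) + 1 = card X + card Y" using card_Un_Int[OF fin] XY by simp
  moreover have "{f\<in>E. line_adj {u, v} f} = (X \<union> Y) - {{u, v}}"
    unfolding X_def Y_def line_adj_def by auto
  moreover have "Suc (card ((X \<union> Y) - {{u, v}})) = card (X \<union> Y)"
    by (rule card_Suc_Diff1) (use XY fin in auto)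
  ultimately show ?thesis unfolding X_def Y_def degree_def by simp
qed

lemma regular_line_graph_degree:
  assumes sg: "simple_graph V E" and reg: "\<forall>v\<in>V. degree E v = k" and e: "e \<in> E"
  shows "card {f\<in>E. line_adj e f} + 2 = 2 * k"
proof -
  have "e \<subseteq> V" "card e = 2" using sg e unfolding simple_graph_def by auto
  then obtain u v where "e = {u, v}" "u \<in> V" "v \<in> V" by (auto simp: card_2_iff)
  then show ?thesis using card_line_adj[OF sg] e reg by simp
qed

lemma vertex_list:
  assumes "finite W"
  shows "distinct (vertex_list W)" and "set (vertex_list W) = W"
proof -
  have "\<exists>vs. distinct vs \<and> set vs = W" using finite_distinct_list[OF assms] by blast
  then have "distinct (vertex_list W) \<and> set (vertex_list W) = W"
    unfolding vertex_list_def by (rule someI_ex)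
  then show "distinct (vertex_list W)" and "set (vertex_list W) = W" by auto
qed

lemma length_vertex_list:
  assumes "finite W"
  shows "length (vertex_list W) = card W"
  using distinct_card[OF vertex_list(1)[OF assms]] vertex_list(2)[OF assms] by simp

lemma adj_matrix_carrier:
  assumes "finite W"
  shows "adj_matrix W R \<in> carrier_mat (card W) (card W)"
  unfolding adj_matrix_def Let_def length_vertex_list[OF assms] by simp

lemma adj_matrix_index:
  assumes "finite W" and "i < card W" and "j < card W"
  shows "adj_matrix W R $$ (i, j) = of_bool (R (vertex_list W ! i) (vertex_list W ! j))"
  using assms unfolding adj_matrix_def Let_def length_vertex_list[OF assms(1)] by simp

lemma adj_matrix_symmetric:
  assumes "finite W" and "symp R" and "i < card W" and "j < card W"
  shows "adj_matrix W R $$ (i, j) = adj_matrix W R $$ (j, i)"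
  using assms by (simp add: adj_matrix_index symp_def) (metis)

lemma adj_matrix_row_sum:
  assumes fin: "finite W" and i: "i < card W"
  shows "(\<Sum>j<card W. adj_matrix W R $$ (i, j)) = real (card {u\<in>W. R (vertex_list W ! i) u})"
proof -
  let ?vs = "vertex_list W" and ?x = "vertex_list W ! i"
  have "(\<Sum>j<card W. adj_matrix W R $$ (i, j)) = sum_list (map (\<lambda>u. of_bool (R ?x u)) ?vs)"
    using fin i by (simp add: adj_matrix_index sum_list_sum_nth length_vertex_list atLeast0LessThan)
  also have "\<dots> = (\<Sum>u\<in>W. of_bool (R ?x u))"
    using vertex_list[OF fin] by (simp add: sum_list_distinct_conv_sum_set)
  also have "\<dots> = real (card {u\<in>W. R ?x u})"
    using fin by (simp add: sum_of_bool_eq Int_def)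
  finally show ?thesis .
qed

lemma mat_trace_adj_matrix:
  assumes "finite W" and "irreflp R"
  shows "mat_trace (adj_matrix W R) = 0"
proof -
  have "dim_row (adj_matrix W R) = card W" using adj_matrix_carrier[OF assms(1)] by auto
  then show ?thesis
    using assms by (auto simp: mat_trace_def adj_matrix_index irreflp_def intro!: sum.neutral)
qed

lemma mat_trace_square_adj_matrix:
  assumes fin: "finite W" and sym: "symp R"
  shows "mat_trace (adj_matrix W R * adj_matrix W R)
    = (\<Sum>i<card W. real (card {u\<in>W. R (vertex_list W ! i) u}))"
proof -
  let ?A = "adj_matrix W R"
  have A: "?A \<in> carrier_mat (card W) (card W)" using fin by (rule adj_matrix_carrier)
  have "?A $$ (i, j) * ?A $$ (j, i) = ?A $$ (i, j)" if "i < card W" "j < card W" for i j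
    using that adj_matrix_symmetric[OF fin sym, of j i] by (simp add: adj_matrix_index fin)
  then have "mat_trace (?A * ?A) = (\<Sum>i<card W. \<Sum>j<card W. ?A $$ (i, j))"
    unfolding mat_trace_def using A by (auto simp: scalar_prod_def atLeast0LessThan intro!: sum.cong)
  then show ?thesis using adj_matrix_row_sum[OF fin] by simp
qed

lemma regular_adj_matrix_eigenvalue:
  assumes fin: "finite W" and "W \<noteq> {}"
    and reg: "\<And>w. w \<in> W \<Longrightarrow> card {u\<in>W. R w u} = d"
  shows "eigenvalue (adj_matrix W R) (real d)"
proof -
  let ?A = "adj_matrix W R" and ?one = "vec (card W) (\<lambda>_. 1 :: real)"
  have A: "?A \<in> carrier_mat (card W) (card W)" using fin by (rule adj_matrix_carrier)
  have "0 < card W" using assms by auto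
  then have "?one \<noteq> 0\<^sub>v (card W)" by (metis index_vec index_zero_vec(1) zero_neq_one)
  moreover have "?A *\<^sub>v ?one = real d \<cdot>\<^sub>v ?one"
  proof (rule eq_vecI)
    fix i assume "i < dim_vec (real d \<cdot>\<^sub>v ?one)"
    then have i: "i < card W" by simp
    have "vertex_list W ! i \<in> W" using vertex_list(2)[OF fin] i length_vertex_list[OF fin] by auto
    then show "(?A *\<^sub>v ?one) $ i = (real d \<cdot>\<^sub>v ?one) $ i"
      using A i adj_matrix_row_sum[OF fin i, of R] reg
      by (simp add: scalar_prod_def atLeast0LessThan)
  qed (use A in simp)
  ultimately show ?thesis
    using A unfolding eigenvalue_def eigenvector_def by (intro exI[of _ ?one]) auto
qed

lemma regular_adj_matrix_spectrum:
  assumes fin: "finite W" and sym: "symp R" and irrefl: "irreflp R"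
    and reg: "\<And>w. w \<in> W \<Longrightarrow> card {u\<in>W. R w u} = d"
  shows "length (eigenvalues_desc (adj_matrix W R)) = card W"
    and "sum_list (eigenvalues_desc (adj_matrix W R)) = 0"
    and "sum_list (map (\<lambda>r. r\<^sup>2) (eigenvalues_desc (adj_matrix W R))) = real (card W * d)"
    and "W \<noteq> {} \<Longrightarrow> real d \<in> set (eigenvalues_desc (adj_matrix W R))"
proof -
  have A: "adj_matrix W R \<in> carrier_mat (card W) (card W)" using fin by (rule adj_matrix_carrier)
  have vs: "vertex_list W ! i \<in> W" if "i < card W" for i
    using vertex_list(2)[OF fin] that length_vertex_list[OF fin] by auto
  note spectrum = real_symmetric_eigenvalues_desc[OF A adj_matrix_symmetric[OF fin sym]]
  show "length (eigenvalues_desc (adj_matrix W R)) = card W" by (rule spectrum(1))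
  show "sum_list (eigenvalues_desc (adj_matrix W R)) = 0"
    using spectrum(2) mat_trace_adj_matrix[OF fin irrefl] by simp
  show "sum_list (map (\<lambda>r. r\<^sup>2) (eigenvalues_desc (adj_matrix W R))) = real (card W * d)"
    using spectrum(3) mat_trace_square_adj_matrix[OF fin sym] vs reg by simp
  show "real d \<in> set (eigenvalues_desc (adj_matrix W R))" if "W \<noteq> {}"
    using eigenvalue_in_eigenvalues_desc[OF A regular_adj_matrix_eigenvalue[OF fin that reg]] .
qed

text \<open>For \<open>n \<ge> 12\<close> the quadratic in \<open>b = 2k - 1\<close> has both roots to the right of \<open>b\<close>;
  otherwise \<open>k < 12\<close>, and completing the square in \<open>n\<close> leaves a quadratic in \<open>k\<close> that is
  positive on \<open>[1, 12]\<close>.\<close>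
lemma order_degree_inequality:
  fixes n k :: real
  assumes k: "1 \<le> k" and kn: "k < n"
  shows "n * k / 2 * (2 * k - 1) < (2 * k - 1)\<^sup>2 + 2 * (n * k / 6 + 1)\<^sup>2"
proof (cases "12 \<le> n")
  case True
  define m where "m = n * k / 2"
  define b where "b = 2 * k - 1"
  have "12 * k \<le> n * k" using True k by (intro mult_right_mono) auto
  then have "b \<le> m / 3" and "0 \<le> m" using k unfolding b_def m_def by linarith+
  then have "0 \<le> (b - m / 3) * (b - 2 * m / 3)" by (intro mult_nonpos_nonpos) auto
  moreover have "b\<^sup>2 + 2 * (m / 3 + 1)\<^sup>2 - m * b = (b - m / 3) * (b - 2 * m / 3) + 4 * m / 3 + 2"
    by (simp add: field_simps power2_eq_square)
  ultimately show ?thesis using \<open>0 \<le> m\<close> unfolding m_def b_def by (simp add: field_simps)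
next
  case False
  define H where "H = 36 * (2 * k - 1)\<^sup>2 - 18 * n * k * (2 * k - 1) + 2 * n\<^sup>2 * k\<^sup>2 + 24 * n * k + 72"
  have H_sos: "8 * k\<^sup>2 * H = (4 * k\<^sup>2 * n - (36 * k\<^sup>2 - 42 * k))\<^sup>2 + 36 * k\<^sup>2 * (52 * k - 4 * k\<^sup>2 - 25)"
    unfolding H_def by (simp add: algebra_simps power2_eq_square)
  have "0 \<le> (k - 1) * (12 - k)" using k kn False by (intro mult_nonneg_nonneg) auto
  then have "0 < 52 * k - 4 * k\<^sup>2 - 25" by (simp add: algebra_simps power2_eq_square)
  with k have "0 < 8 * k\<^sup>2 * H" unfolding H_sos by (simp add: add_nonneg_pos)
  then have "0 < H" using k by (simp add: zero_less_mult_iff)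
  then show ?thesis unfolding H_def by (simp add: field_simps power2_eq_square)
qed

theorem theorem3p3:
  fixes V :: "'a set" and E :: "'a set set"
  assumes "regular_graph V E"
    and "card E \<ge> 3"
  shows "graph_lambda 3 E line_adj < real (card E) / 3"
proof (rule ccontr)
  assume "\<not> graph_lambda 3 E line_adj < real (card E) / 3"
  then have third: "real (card E) / 3 \<le> eigenvalues_desc (adj_matrix E line_adj) ! 2"
    by (simp add: graph_lambda_def)
  from assms(1) obtain k where sg: "simple_graph V E" and reg: "\<forall>v\<in>V. degree E v = k"
    unfolding regular_graph_def by blast
  obtain e0 where e0: "e0 \<in> E" using assms(2) by force
  then have "e0 \<subseteq> V" and "card e0 = 2" using sg unfolding simple_graph_def by auto
  then obtain v where v: "v \<in> V" by (metis card.empty ex_in_conv subset_iff zero_neq_numeral)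
  have line_deg: "card {f\<in>E. line_adj e f} = 2 * k - 2" "1 \<le> k" if "e \<in> E" for e
    using regular_line_graph_degree[OF sg reg that] by auto
  have "symp line_adj" "irreflp line_adj" by (auto simp: symp_def irreflp_def line_adj_def)
  note spectrum = regular_adj_matrix_spectrum[OF simple_graph_finite_edges[OF sg] this line_deg(1)]
  have "sum_list (map (\<lambda>r. (r + 1)\<^sup>2) (eigenvalues_desc (adj_matrix E line_adj)))
      = real (card E) * (2 * real k - 1)"
    using spectrum(1-3) line_deg(2)[OF e0]
    by (simp add: power2_sum sum_list_addf sum_list_const_mult sum_list_mult_const sum_list_triv
        of_nat_diff algebra_simps)
  moreover have "(real (2 * k - 2) + 1)\<^sup>2 + 2 * (real (card E) / 3 + 1)\<^sup>2
      \<le> sum_list (map (\<lambda>r. (r + 1)\<^sup>2) (eigenvalues_desc (adj_matrix E line_adj)))"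
    using spectrum(1,4) e0 third assms(2)
    by (intro sum_list_ge_member_and_two_leading sorted_eigenvalues_desc power_mono) auto
  moreover have "real (card V) * real k = 2 * real (card E)"
    using sum_degree_eq_twice_card_edges[OF sg] reg by (simp flip: of_nat_mult)
  moreover have "real k < real (card V)" using degree_less_card[OF sg v] reg v by simp
  ultimately show False
    using order_degree_inequality[of "real k" "real (card V)"] line_deg(2)[OF e0]
    by (simp add: of_nat_diff)
qed

end
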